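(* Let $\mathbb{H}$ be a finite-dimensional complex Hilbert space and let $t\mapsto H(t)$ be a continuous family of self-adjoint operators on $\mathbb{H}$, with propagator $\{U(t,s)\}_{t,s\in\mathbb{R}}$ (unitaries with $U(t,t)=I$, $U(t,r)U(r,s)=U(t,s)$ and $\mathrm{i}\frac{d}{dt}U(t,s)=H(t)U(t,s)$). Let $X_0=\sum_{j=1}^n\lambda_jE_j$ be a self-adjoint operator with distinct eigenvalues $\lambda_1,\dots,\lambda_n$ and spectral projections $E_j$, and suppose there is $T>0$ with $U(0,T)E_jU(T,0)=E_j$ for all $1\le j\le n$. Fix $j$, let $d_j=\dim E_j[\mathbb{H}]$, let $\{\psi^{(j)}_k:1\le k\le d_j\}$ be an orthonormal basis of $E_j[\mathbb{H}]$, and set $\psi^{(j)}_k(t)=U(0,t)\psi^{(j)}_k$. Let $C_j(t)=[c^{(j)}_{mk}(t)]_{m,k=1}^{d_j}$ with $c^{(j)}_{mk}(t)=\langle\psi^{(j)}_m,H(t)\psi^{(j)}_k\rangle$, let $\tilde V_j(t)=[\tilde v^{(j)}_{mk}(t)]$ be the solution of $\mathrm{i}\frac{d}{dt}\tilde V_j(t)=C_j(t)\tilde V_j(t)$ with $\tilde V_j(0)=I_{d_j}$, and define $\tilde\psi^{(j)}_k(t)=\sum_{m=1}^{d_j}\tilde v^{(j)}_{mk}(t)\psi^{(j)}_m(t)$. Then for all $t$ and all $1\le m,k\le d_j$, $$\Big\langle \tilde\psi^{(j)}_m(t),\frac{d}{dt}\tilde\psi^{(j)}_k(t)\Big\rangle=0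 .$$
   Context: Inner products are linear in the second argument. $U(0,t)=U(t,0)^{-1}$. The matrices $C_j(t)$ are Hermitian, so $\tilde V_j(t)$ is unitary and $\{\tilde\psi^{(j)}_k(t)\}_k$ is an orthonormal basis of $U(0,t)E_jU(t,0)[\mathbb{H}]$. *)

theory Defs
  imports "HOL-Analysis.Analysis"
begin

text \<open>The finite-dimensional complex Hilbert space is modelled as complex ^ 'n
  (any finite-dimensional complex Hilbert space is isometric to such a space),
  operators as complex matrices complex ^ 'n ^ 'n.\<close>

definition cinner :: "complex ^ 'n \<Rightarrow> complex ^ 'n \<Rightarrow> complex" where
  "cinner x y = (\<Sum>i\<in>UNIV. cnj (x $ i) * y $ i)"

definition adjoint_mat :: "complex ^ 'n ^ 'n \<Rightarrow> complex ^ 'n ^ 'n" where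
  "adjoint_mat A = (\<chi> i j. cnj (A $ j $ i))"

definition self_adjoint_mat :: "complex ^ 'n ^ 'n \<Rightarrow> bool" where
  "self_adjoint_mat A \<longleftrightarrow> adjoint_mat A = A"

definition unitary_mat :: "complex ^ 'n ^ 'n \<Rightarrow> bool" where
  "unitary_mat U \<longleftrightarrow> adjoint_mat U ** U = mat 1 \<and> U ** adjoint_mat U = mat 1"

definition cscale_mat :: "complex \<Rightarrow> complex ^ 'n ^ 'n \<Rightarrow> complex ^ 'n ^ 'n" where
  "cscale_mat c A = (\<chi> i j. c * A $ i $ j)"

definition orth_proj_mat :: "complex ^ 'n ^ 'n \<Rightarrow> bool" where
  "orth_proj_mat P \<longleftrightarrow> P ** P = P \<and> self_adjoint_mat P"

end

theory Submission
  imports Defs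
begin

text \<open>Write \<open>\<psi>\<^sub>l(s) = U(0,s)\<psi>\<^sub>l\<close>. Since \<open>U(0,s)\<close> is the adjoint of \<open>U(s,0)\<close>, it solves
  \<open>d/ds U(0,s) = i U(0,s) H(s)\<close>, so by unitarity and orthonormality the component of
  \<open>\<psi>\<^sub>l'(t)\<close> along \<open>\<psi>\<^sub>q(t)\<close> is \<open>i c\<^sub>q\<^sub>l(t)\<close>. Hence the component of the derivative of
  \<open>\<Sum>\<^sub>l v\<^sub>l\<^sub>k(t) \<psi>\<^sub>l(t)\<close> along \<open>\<psi>\<^sub>q(t)\<close> is \<open>v\<^sub>q\<^sub>k'(t) + i (C(t) V(t))\<^sub>q\<^sub>k\<close>, which vanishes by the
  equation for \<open>V\<close>; and \<open>\<psi>\<^sub>m(t)\<close> is a combination of the \<open>\<psi>\<^sub>q(t)\<close>.\<close>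

lemma cinner_sum_left: "cinner (\<Sum>q\<in>A. f q) y = (\<Sum>q\<in>A. cinner (f q) y)"
  unfolding cinner_def by (simp add: sum_distrib_right) (rule sum.swap)

lemma cinner_sum_right: "cinner x (\<Sum>q\<in>A. f q) = (\<Sum>q\<in>A. cinner x (f q))"
  unfolding cinner_def by (simp add: sum_distrib_left) (rule sum.swap)

lemma cinner_add_right: "cinner x (y + z) = cinner x y + cinner x z"
  unfolding cinner_def by (simp add: sum.distrib algebra_simps)

lemma cinner_scalar_mult_left: "cinner (c *s x) y = cnj c * cinner x y"
  unfolding cinner_def by (simp add: sum_distrib_left algebra_simps)

lemma cinner_scalar_mult_right: "cinner x (c *s y) = c * cinner x y"
  unfolding cinner_def by (simp add: sum_distrib_left algebra_simps)

lemma cinner_adjoint_mat: "cinner x (A *v y) = cinner (adjoint_mat A *v x) y"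
  unfolding cinner_def adjoint_mat_def matrix_vector_mult_def
  by (simp add: sum_distrib_left sum_distrib_right mult_ac) (rule sum.swap)

lemma adjoint_mat_mult: "adjoint_mat (A ** B) = adjoint_mat B ** adjoint_mat A"
  unfolding adjoint_mat_def matrix_matrix_mult_def by (simp add: vec_eq_iff mult.commute)

lemma adjoint_mat_cscale_mat: "adjoint_mat (cscale_mat c A) = cscale_mat (cnj c) (adjoint_mat A)"
  unfolding adjoint_mat_def cscale_mat_def by simp

lemma cscale_mat_vector_mult: "cscale_mat c A *v x = c *s (A *v x)"
  unfolding cscale_mat_def matrix_vector_mult_def by (simp add: vec_eq_iff sum_distrib_left mult.assoc)

lemma cinner_isometry:
  assumes "adjoint_mat W ** W = mat 1"
  shows "cinner (W *v x) (W *v y) = cinner x y"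
  by (simp add: cinner_adjoint_mat matrix_vector_mul_assoc assms)

lemma left_inverse_eq_adjoint_mat:
  assumes "unitary_mat A" and "B ** A = mat 1"
  shows "B = adjoint_mat A"
proof -
  have "B = B ** (A ** adjoint_mat A)"
    using assms(1) by (simp add: unitary_mat_def)
  also have "\<dots> = adjoint_mat A"
    by (simp add: matrix_mul_assoc assms(2))
  finally show ?thesis .
qed

lemma bounded_linear_adjoint_mat: "bounded_linear (adjoint_mat :: complex ^ 'n ^ 'n \<Rightarrow> _)"
  by (auto simp: linear_conv_bounded_linear[symmetric] adjoint_mat_def vec_eq_iff intro!: linearI)

lemma bounded_linear_matrix_vector_mult_left: "bounded_linear (\<lambda>A :: complex ^ 'n ^ 'm. A *v x)"
  by (auto simp: linear_conv_bounded_linear[symmetric] matrix_vector_mult_def vec_eq_iff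
      sum.distrib scaleR_sum_right algebra_simps intro!: linearI)

lemma bounded_bilinear_vector_scalar_mult:
  "bounded_bilinear (\<lambda>(c :: complex) (x :: complex ^ 'n). c *s x)"
  by (auto simp: bilinear_conv_bounded_bilinear[symmetric] bilinear_def vec_eq_iff algebra_simps
      intro!: linearI)

lemma has_vector_derivative_adjoint_mat:
  fixes A :: "real \<Rightarrow> complex ^ 'n ^ 'n"
  shows "(A has_vector_derivative A') F \<Longrightarrow>
    ((\<lambda>s. adjoint_mat (A s)) has_vector_derivative adjoint_mat A') F"
  by (rule bounded_linear.has_vector_derivative[OF bounded_linear_adjoint_mat])

lemma has_vector_derivative_matrix_vector_mult_left:
  fixes A :: "real \<Rightarrow> complex ^ 'n ^ 'm"
  shows "(A has_vector_derivative A') F \<Longrightarrow> ((\<lambda>s. A s *v x) has_vector_derivative A' *v x) F"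
  by (rule bounded_linear.has_vector_derivative[OF bounded_linear_matrix_vector_mult_left])

lemma has_vector_derivative_vector_scalar_mult:
  fixes c :: "real \<Rightarrow> complex" and x :: "real \<Rightarrow> complex ^ 'n"
  shows "(c has_vector_derivative c') (at t within S) \<Longrightarrow> (x has_vector_derivative x') (at t within S) \<Longrightarrow>
   ((\<lambda>s. c s *s x s) has_vector_derivative c t *s x' + c' *s x t) (at t within S)"
  by (rule bounded_bilinear.has_vector_derivative[OF bounded_bilinear_vector_scalar_mult])

lemma has_vector_derivative_adjoint_schroedinger:
  assumes "self_adjoint_mat K"
    and "(A has_vector_derivative cscale_mat (- \<i>) (K ** A t)) (at t)"
  shows "((\<lambda>s. adjoint_mat (A s)) has_vector_derivative cscale_mat \<i> (adjoint_mat (A t) ** K)) (at t)"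
  using has_vector_derivative_adjoint_mat[OF assms(2)] assms(1)
  by (simp add: adjoint_mat_cscale_mat adjoint_mat_mult self_adjoint_mat_def)

text \<open>The second argument of \<open>cinner\<close> is the derivative of \<open>\<Sum>\<^sub>l v\<^sub>l(s) W(s) \<psi>\<^sub>l\<close> when \<open>W' = i W K\<close>.\<close>

lemma cinner_frame_vector_derivative:
  fixes W K :: "complex ^ 'n ^ 'n"
  assumes "adjoint_mat W ** W = mat 1"
    and "finite L" "q \<in> L"
    and "\<And>l. l \<in> L \<Longrightarrow> cinner (\<psi> q) (\<psi> l) = (if q = l then 1 else 0)"
  shows "cinner (W *v \<psi> q) (\<Sum>l\<in>L. v l *s (cscale_mat \<i> (W ** K) *v \<psi> l) + v' l *s (W *v \<psi> l))
         = v' q + \<i> * (\<Sum>l\<in>L. cinner (\<psi> q) (K *v \<psi> l) * v l)"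
proof -
  have "cinner (W *v \<psi> q) (\<Sum>l\<in>L. v l *s (cscale_mat \<i> (W ** K) *v \<psi> l) + v' l *s (W *v \<psi> l))
      = (\<Sum>l\<in>L. \<i> * (cinner (\<psi> q) (K *v \<psi> l) * v l) + v' l * (if q = l then 1 else 0))"
    using assms(4)
    by (simp add: cinner_sum_right cinner_add_right cinner_scalar_mult_right cscale_mat_vector_mult
        matrix_vector_mul_assoc[symmetric] cinner_isometry[OF assms(1)] mult_ac)
  then show ?thesis
    using assms(2,3) by (simp add: sum.distrib sum_distrib_left mult.commute[of "v' _"] mult_if_delta)
qed

theorem proposition2p1:
  fixes H :: "real \<Rightarrow> complex ^ 'n ^ 'n"
    and U :: "real \<Rightarrow> real \<Rightarrow> complex ^ 'n ^ 'n"
    and X0 :: "complex ^ 'n ^ 'n"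
    and n :: nat and lam :: "nat \<Rightarrow> real" and E :: "nat \<Rightarrow> complex ^ 'n ^ 'n"
    and T :: real and j :: nat and d :: nat
    and \<psi> :: "nat \<Rightarrow> complex ^ 'n"
    and V :: "real \<Rightarrow> nat \<Rightarrow> nat \<Rightarrow> complex"
  assumes H_cont: "continuous_on UNIV H"
    and H_sa: "\<And>t. self_adjoint_mat (H t)"
    and U_unitary: "\<And>t s. unitary_mat (U t s)"
    and U_id: "\<And>t. U t t = mat 1"
    and U_comp: "\<And>t r s. U t r ** U r s = U t s"
    and U_deriv: "\<And>t s. ((\<lambda>\<tau>. U \<tau> s) has_vector_derivative
                             cscale_mat (- \<i>) (H t ** U t s)) (at t)"
    and n_pos: "n \<ge> 1"
    and lam_distinct: "inj_on lam {1..n}"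
    and E_proj: "\<And>i. i \<in> {1..n} \<Longrightarrow> orth_proj_mat (E i)"
    and E_nonzero: "\<And>i. i \<in> {1..n} \<Longrightarrow> E i \<noteq> 0"
    and E_orth: "\<And>i l. i \<in> {1..n} \<Longrightarrow> l \<in> {1..n} \<Longrightarrow> i \<noteq> l \<Longrightarrow> E i ** E l = 0"
    and E_sum: "(\<Sum>i=1..n. E i) = mat 1"
    and X0_def: "X0 = (\<Sum>i=1..n. cscale_mat (complex_of_real (lam i)) (E i))"
    and T_pos: "T > 0"
    and periodic: "\<And>i. i \<in> {1..n} \<Longrightarrow> U 0 T ** E i ** U T 0 = E i"
    and j_range: "j \<in> {1..n}"
    and d_def: "d = vec.dim (range (\<lambda>x. E j *v x))"
    and \<psi>_in: "\<And>k. k \<in> {1..d} \<Longrightarrow> \<psi> k \<in> range (\<lambda>x. E j *v x)"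
    and \<psi>_orthonormal: "\<And>m k. m \<in> {1..d} \<Longrightarrow> k \<in> {1..d} \<Longrightarrow>
                          cinner (\<psi> m) (\<psi> k) = (if m = k then 1 else 0)"
    and \<psi>_span: "vec.span (\<psi> ` {1..d}) = range (\<lambda>x. E j *v x)"
    and V_ode: "\<And>t m k. m \<in> {1..d} \<Longrightarrow> k \<in> {1..d} \<Longrightarrow>
       ((\<lambda>\<tau>. V \<tau> m k) has_vector_derivative
          (- \<i>) * (\<Sum>l=1..d. cinner (\<psi> m) (H t *v \<psi> l) * V t l k)) (at t)"
    and V_init: "\<And>m k. m \<in> {1..d} \<Longrightarrow> k \<in> {1..d} \<Longrightarrow>
                   V 0 m k = (if m = k then 1 else 0)"
  shows "\<forall>t m k. m \<in> {1..d} \<longrightarrow> k \<in> {1..d} \<longrightarrow>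
     (let \<psi>t = (\<lambda>k s. \<Sum>l=1..d. V s l k *s (U 0 s *v \<psi> l))
      in (\<psi>t k) differentiable (at t) \<and>
         cinner (\<psi>t m t) (vector_derivative (\<psi>t k) (at t)) = 0)"
proof (intro allI impI)
  fix t :: real and m k :: nat
  assume "m \<in> {1..d}" and k: "k \<in> {1..d}"
  have U_inverse: "U 0 s = adjoint_mat (U s 0)" for s
    using left_inverse_eq_adjoint_mat U_unitary U_comp U_id by metis
  have U0_isometry: "adjoint_mat (U 0 t) ** U 0 t = mat 1"
    using U_unitary unfolding unitary_mat_def by blast
  have U0_deriv: "((\<lambda>s. U 0 s) has_vector_derivative cscale_mat \<i> (U 0 t ** H t)) (at t)"
    using has_vector_derivative_adjoint_schroedinger[OF H_sa U_deriv[where s = 0 and t = t]]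
    by (simp add: U_inverse[symmetric])
  define D where "D = (\<Sum>l=1..d. V t l k *s (cscale_mat \<i> (U 0 t ** H t) *v \<psi> l)
      + (- \<i>) * (\<Sum>p=1..d. cinner (\<psi> l) (H t *v \<psi> p) * V t p k) *s (U 0 t *v \<psi> l))"
  have \<psi>t_deriv: "((\<lambda>s. \<Sum>l=1..d. V s l k *s (U 0 s *v \<psi> l)) has_vector_derivative D) (at t)"
    unfolding D_def
    by (intro has_vector_derivative_sum has_vector_derivative_vector_scalar_mult
        has_vector_derivative_matrix_vector_mult_left U0_deriv V_ode k)
  have "cinner (U 0 t *v \<psi> q) D = 0" if "q \<in> {1..d}" for q
    unfolding D_def using that \<psi>_orthonormal
    by (subst cinner_frame_vector_derivative[OF U0_isometry]) auto
  then have "cinner (\<Sum>q=1..d. V t q m *s (U 0 t *v \<psi> q)) D = 0"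
    by (simp add: cinner_sum_left cinner_scalar_mult_left)
  then show "let \<psi>t = (\<lambda>k s. \<Sum>l=1..d. V s l k *s (U 0 s *v \<psi> l))
      in (\<psi>t k) differentiable (at t) \<and> cinner (\<psi>t m t) (vector_derivative (\<psi>t k) (at t)) = 0"
    using \<psi>t_deriv by (simp add: Let_def differentiableI_vector vector_derivative_at)
qed

end
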